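(* Let $A$ be a finite set of actions and let $\{\pi_\theta\}_{\theta\in\mathbb{R}^d}$ be a family of probability distributions on $A$ with $\pi_\theta(a)>0$ and $\theta\mapsto\pi_\theta(a)$ differentiable for every $a\in A$. Let $R:A\to\mathbb{R}$ be the reward function, let $A$ also denote the random action drawn from $\pi_\theta$, and write $R=R(A)$ for the resulting reward random variable. Define the objective $\eta_s(\theta):=\mathbb{E}_{a\sim\pi_\theta}[R(a)]$, its gradient $g_s(\theta):=\nabla_\theta\eta_s(\theta)$, and the score function $S_\theta(a):=\nabla_\theta\log\pi_\theta(a)$. Assume that for all $a\in A$, $$\|S_\theta(a)\|\le G_{\max},\qquad |R(a)|\le R_{\max}.$$ Then $$\|g_s(\theta)\|\le \sqrt{2}\,G_{\max}R_{\max}\sqrt{I(A;R)},$$ where $I(A;R)$ is the mutual information between the action $A\sim\pi_\theta$ and the reward $R$.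
   Context: This is the "one-shot game" (horizon one): the state is fixed, the agent draws an action $a\sim\pi_\theta$ and receives reward $R(a)$. $\|\cdot\|$ is the Euclidean norm on $\mathbb{R}^d$. Mutual information is taken with the natural logarithm. *)

theory Defs
  imports "HOL-Analysis.Analysis"
begin

text \<open>Gradient of a real-valued function on a Euclidean space: the (unique, when f is
differentiable at x) vector g whose inner product represents the Frechet derivative.\<close>
definition grad :: "('v::euclidean_space \<Rightarrow> real) \<Rightarrow> 'v \<Rightarrow> 'v" where
  "grad f x = (SOME g. (f has_derivative (\<lambda>h. g \<bullet> h)) (at x))"

definition mutual_info ::
  "('a::finite \<Rightarrow> real) \<Rightarrow> ('a \<Rightarrow> 'b) \<Rightarrow> ('a \<Rightarrow> 'c) \<Rightarrow> real" where
  "mutual_info p X Y =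
     (\<Sum>x\<in>X ` UNIV. \<Sum>y\<in>Y ` UNIV.
        let pxy = (\<Sum>a | X a = x \<and> Y a = y. p a);
            px  = (\<Sum>a | X a = x. p a);
            py  = (\<Sum>a | Y a = y. p a)
        in if pxy = 0 then 0 else pxy * ln (pxy / (px * py)))"

end

theory Submission
  imports Defs
begin

text \<open>Since the probabilities sum to one, the gradients \<open>\<nabla>\<pi>(a)\<close> sum to zero, so
\<open>\<nabla>\<eta> = \<Sum>\<^sub>a (R(a) - c) \<nabla>\<pi>(a)\<close> for every baseline \<open>c\<close>, while
\<open>\<parallel>\<nabla>\<pi>(a)\<parallel> = \<pi>(a) \<parallel>S(a)\<parallel> \<le> \<pi>(a) G\<close>. With \<open>M\<close> a bound on \<open>\<bar>R\<bar>\<close>, the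
baseline \<open>c = 0\<close> gives \<open>\<parallel>\<nabla>\<eta>\<parallel> \<le> G M\<close>; taking for \<open>c\<close> the most likely reward value gives
\<open>\<parallel>\<nabla>\<eta>\<parallel> \<le> 2 G M x\<close>, where \<open>x\<close> is the probability that the reward differs from \<open>c\<close>.
As the action determines the reward, \<open>I(A;R) = H(R)\<close>, and \<open>ln y \<le> y - 1\<close> gives
\<open>H(R) \<ge> 1 - max\<^sub>y P(R = y) = x\<close>. Finally \<open>min 1 (2x) \<le> \<surd>(2x)\<close>.\<close>

lemma has_derivative_grad:
  fixes f :: "'v::euclidean_space \<Rightarrow> real"
  assumes "f differentiable (at x)"
  shows "(f has_derivative (\<lambda>h. grad f x \<bullet> h)) (at x)"
proof -
  obtain f' where f': "(f has_derivative f') (at x)"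
    using assms differentiable_def by blast
  have "f' = (\<lambda>h. adjoint f' 1 \<bullet> h)"
    using adjoint_works[OF has_derivative_linear[OF f'], of _ 1] by (auto simp: inner_commute)
  then have "\<exists>g. (f has_derivative (\<lambda>h. g \<bullet> h)) (at x)"
    using f' by metis
  then show ?thesis
    unfolding grad_def by (rule someI_ex)
qed

lemma grad_eqI:
  fixes f :: "'v::euclidean_space \<Rightarrow> real"
  assumes "(f has_derivative (\<lambda>h. g \<bullet> h)) (at x)"
  shows "grad f x = g"
proof -
  have "(\<lambda>h. grad f x \<bullet> h) = (\<lambda>h. g \<bullet> h)"
    using has_derivative_unique has_derivative_grad assms differentiable_def by blast
  then show ?thesis
    by (metis vector_eq_rdot)
qed

lemma grad_const: "grad (\<lambda>t::'v::euclidean_space. c) x = 0"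
  by (rule grad_eqI) simp

lemma grad_ln:
  fixes f :: "'v::euclidean_space \<Rightarrow> real"
  assumes "f differentiable (at x)" and "0 < f x"
  shows "grad (\<lambda>t. ln (f t)) x = (1 / f x) *\<^sub>R grad f x"
proof (rule grad_eqI)
  show "((\<lambda>t. ln (f t)) has_derivative (\<lambda>h. ((1 / f x) *\<^sub>R grad f x) \<bullet> h)) (at x)"
    using has_derivative_ln[OF assms(2) has_derivative_grad[OF assms(1)]]
    by (simp add: divide_inverse mult.commute)
qed

lemma grad_sum:
  fixes f :: "'i \<Rightarrow> 'v::euclidean_space \<Rightarrow> real"
  assumes "finite I" and "\<And>i. i \<in> I \<Longrightarrow> f i differentiable (at x)"
  shows "grad (\<lambda>t. \<Sum>i\<in>I. f i t) x = (\<Sum>i\<in>I. grad (f i) x)"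
proof (rule grad_eqI)
  have "((\<lambda>t. \<Sum>i\<in>I. f i t) has_derivative (\<lambda>h. \<Sum>i\<in>I. grad (f i) x \<bullet> h)) (at x)"
    using assms(2) by (intro has_derivative_sum has_derivative_grad)
  then show "((\<lambda>t. \<Sum>i\<in>I. f i t) has_derivative (\<lambda>h. (\<Sum>i\<in>I. grad (f i) x) \<bullet> h)) (at x)"
    by (simp add: inner_sum_left)
qed

lemma grad_mult_const:
  fixes f :: "'v::euclidean_space \<Rightarrow> real"
  assumes "f differentiable (at x)"
  shows "grad (\<lambda>t. f t * c) x = c *\<^sub>R grad f x"
proof (rule grad_eqI)
  show "((\<lambda>t. f t * c) has_derivative (\<lambda>h. (c *\<^sub>R grad f x) \<bullet> h)) (at x)"
    using has_derivative_mult_left[OF has_derivative_grad[OF assms], of c]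
    by (simp add: mult.commute)
qed

definition law :: "('a::finite \<Rightarrow> real) \<Rightarrow> ('a \<Rightarrow> 'b) \<Rightarrow> 'b \<Rightarrow> real" where
  "law p X y = (\<Sum>a | X a = y. p a)"

lemma prob_le_law:
  assumes "\<And>a. 0 \<le> p a"
  shows "p a \<le> law p X (X a)"
proof -
  have "(\<Sum>a'\<in>{a}. p a') \<le> (\<Sum>a' | X a' = X a. p a')"
    using assms by (intro sum_mono2) auto
  then show ?thesis
    by (simp add: law_def)
qed

lemma sum_neq_eq_one_minus_law:
  assumes "(\<Sum>a\<in>UNIV. p a) = 1"
  shows "(\<Sum>a | X a \<noteq> y. p a) = 1 - law p X y"
proof -
  have "(\<Sum>a\<in>UNIV. p a) = (\<Sum>a | X a = y. p a) + (\<Sum>a | X a \<noteq> y. p a)"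
    by (subst sum.union_disjoint[symmetric]) (auto intro: sum.cong)
  then show ?thesis
    using assms by (simp add: law_def)
qed

lemma mutual_info_id_eq_entropy:
  assumes "\<And>a. 0 \<le> p a"
  shows "mutual_info p (\<lambda>a. a) X = - (\<Sum>a\<in>UNIV. p a * ln (law p X (X a)))"
proof -
  have summand: "(let pxy = (\<Sum>a | a = x \<and> X a = y. p a);
                   px  = (\<Sum>a | a = x. p a);
                   py  = (\<Sum>a | X a = y. p a)
               in if pxy = 0 then 0 else pxy * ln (pxy / (px * py)))
            = (if X x = y then - p x * ln (law p X (X x)) else 0)" for x y
  proof (cases "X x = y \<and> p x \<noteq> 0")
    case True
    moreover have "p x \<le> law p X (X x)"
      by (rule prob_le_law[OF assms])
    ultimately have "0 < p x" "0 < law p X (X x)"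
      using assms[of x] by linarith+
    moreover have "{a. a = x \<and> X a = y} = {x}" "{a. a = x} = {x}"
      using True by auto
    ultimately show ?thesis
      using True by (simp add: law_def ln_div ln_mult)
  next
    case False
    moreover have "{a. a = x \<and> X a = y} = (if X x = y then {x} else {})"
      by auto
    ultimately show ?thesis
      by (auto simp: Let_def)
  qed
  show ?thesis
    unfolding mutual_info_def summand by (simp add: sum.delta sum_negf)
qed

lemma entropy_ge_one_minus_max_law:
  assumes "\<And>a. 0 \<le> p a" and "(\<Sum>a\<in>UNIV. p a) = 1"
    and "\<And>a. law p X (X a) \<le> m"
  shows "1 - m \<le> - (\<Sum>a\<in>UNIV. p a * ln (law p X (X a)))"
proof -
  have "p a * (1 - m) \<le> - (p a * ln (law p X (X a)))" for a
  proof (cases "p a = 0")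
    case False
    moreover have "p a \<le> law p X (X a)"
      by (rule prob_le_law[OF assms(1)])
    ultimately have "0 < law p X (X a)"
      using assms(1)[of a] by linarith
    then have "1 - m \<le> - ln (law p X (X a))"
      using ln_le_minus_one assms(3)[of a] by fastforce
    from mult_left_mono[OF this assms(1)[of a]] show ?thesis
      by simp
  qed simp
  then have "(\<Sum>a\<in>UNIV. p a * (1 - m)) \<le> (\<Sum>a\<in>UNIV. - (p a * ln (law p X (X a))))"
    by (rule sum_mono)
  then show ?thesis
    using assms(2) by (simp add: sum_distrib_right[symmetric] sum_negf)
qed

lemma norm_sum_scaleR_le_baseline:
  fixes D :: "'a \<Rightarrow> 'v::real_normed_vector"
  assumes "(\<Sum>a\<in>A. D a) = 0" and "\<And>a. a \<in> A \<Longrightarrow> norm (D a) \<le> p a * G"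
  shows "norm (\<Sum>a\<in>A. r a *\<^sub>R D a) \<le> G * (\<Sum>a\<in>A. \<bar>r a - c\<bar> * p a)"
proof -
  have "(\<Sum>a\<in>A. r a *\<^sub>R D a) = (\<Sum>a\<in>A. (r a - c) *\<^sub>R D a)"
    using assms(1) by (simp add: scaleR_diff_left sum_subtractf scaleR_sum_right[symmetric])
  also have "norm \<dots> \<le> (\<Sum>a\<in>A. \<bar>r a - c\<bar> * norm (D a))"
    by (rule norm_sum[THEN order_trans]) simp
  also have "\<dots> \<le> (\<Sum>a\<in>A. \<bar>r a - c\<bar> * (p a * G))"
    using assms(2) by (intro sum_mono mult_left_mono) auto
  finally show ?thesis
    by (simp add: sum_distrib_left mult_ac)
qed

lemma min_one_le_sqrt:
  fixes x :: real
  assumes "0 \<le> x"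
  shows "min 1 x \<le> sqrt x"
proof (cases "x \<le> 1")
  case True
  then have "x\<^sup>2 \<le> x"
    using assms by (simp add: power2_eq_square mult_left_le_one_le)
  then show ?thesis
    using True by (simp add: real_le_rsqrt)
qed simp

lemma sum_abs_diff_le_mass_of_neq:
  fixes p r :: "'a::finite \<Rightarrow> real"
  assumes "\<And>a. 0 \<le> p a" and "\<And>a. \<bar>r a\<bar> \<le> M"
  shows "(\<Sum>a\<in>UNIV. \<bar>r a - r b\<bar> * p a) \<le> 2 * M * (\<Sum>a | r a \<noteq> r b. p a)"
proof -
  have "(\<Sum>a\<in>UNIV. \<bar>r a - r b\<bar> * p a) \<le> (\<Sum>a\<in>UNIV. if r a = r b then 0 else 2 * M * p a)"
  proof (rule sum_mono)
    fix a
    have "\<bar>r a - r b\<bar> \<le> 2 * M"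
      using assms(2)[of a] assms(2)[of b] by linarith
    then show "\<bar>r a - r b\<bar> * p a \<le> (if r a = r b then 0 else 2 * M * p a)"
      using assms(1)[of a] by (simp add: mult_right_mono)
  qed
  also have "\<dots> = 2 * M * (\<Sum>a | r a \<noteq> r b. p a)"
    by (simp add: sum.If_cases sum_distrib_left Compl_eq set_diff_eq)
  finally show ?thesis .
qed

lemma norm_sum_scaleR_le_mutual_info:
  fixes p r :: "'a::finite \<Rightarrow> real" and D :: "'a \<Rightarrow> 'v::real_normed_vector"
  assumes p_nonneg: "\<And>a. 0 \<le> p a" and p_sum: "(\<Sum>a\<in>UNIV. p a) = 1"
    and D_sum: "(\<Sum>a\<in>UNIV. D a) = 0" and D_norm: "\<And>a. norm (D a) \<le> p a * G"
    and r_bound: "\<And>a. \<bar>r a\<bar> \<le> M"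
  shows "norm (\<Sum>a\<in>UNIV. r a *\<^sub>R D a)
           \<le> sqrt 2 * G * M * sqrt (mutual_info p (\<lambda>a. a) r)"
proof -
  have "0 \<le> (\<Sum>a\<in>UNIV. p a * G)"
    using D_norm by (intro sum_nonneg) (meson norm_ge_zero order_trans)
  then have G_nonneg: "0 \<le> G"
    by (simp add: sum_distrib_right[symmetric] p_sum)
  have M_nonneg: "0 \<le> M"
    using r_bound[of undefined] by linarith
  obtain b where mode: "\<And>a. law p r (r a) \<le> law p r (r b)"
  proof -
    let ?laws = "range (\<lambda>a. law p r (r a))"
    have "Max ?laws \<in> ?laws"
      by (rule Max_in) simp_all
    then obtain b where b: "Max ?laws = law p r (r b)"
      by (rule rangeE)
    have "law p r (r a) \<le> law p r (r b)" for a
      using Max_ge[of ?laws "law p r (r a)"] b by simp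
    then show ?thesis
      by (rule that)
  qed
  define x where "x = 1 - law p r (r b)"
  have x_le_mutual_info: "x \<le> mutual_info p (\<lambda>a. a) r"
    unfolding x_def mutual_info_id_eq_entropy[OF p_nonneg]
    by (rule entropy_ge_one_minus_max_law[OF p_nonneg p_sum mode])
  have x_eq: "x = (\<Sum>a | r a \<noteq> r b. p a)"
    unfolding x_def by (rule sum_neq_eq_one_minus_law[OF p_sum, symmetric])
  have "0 \<le> x"
    unfolding x_eq by (simp add: p_nonneg sum_nonneg)
  have "(\<Sum>a\<in>UNIV. \<bar>r a - 0\<bar> * p a) \<le> (\<Sum>a\<in>UNIV. M * p a)"
    using r_bound p_nonneg by (intro sum_mono mult_right_mono) auto
  then have "norm (\<Sum>a\<in>UNIV. r a *\<^sub>R D a) \<le> G * M"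
    using norm_sum_scaleR_le_baseline[OF D_sum D_norm, of r 0] G_nonneg p_sum
    by (simp add: sum_distrib_left[symmetric]) (meson mult_left_mono order_trans)
  moreover have "norm (\<Sum>a\<in>UNIV. r a *\<^sub>R D a) \<le> G * (M * (2 * x))"
    using norm_sum_scaleR_le_baseline[OF D_sum D_norm, of r "r b"] G_nonneg
      sum_abs_diff_le_mass_of_neq[OF p_nonneg r_bound, where b=b] x_eq
    by (simp add: mult_ac) (meson mult_left_mono order_trans)
  ultimately have "norm (\<Sum>a\<in>UNIV. r a *\<^sub>R D a) \<le> G * M * min 1 (2 * x)"
    by (simp add: min_def mult_ac)
  also have "\<dots> \<le> G * M * sqrt (2 * x)"
    using min_one_le_sqrt[of "2 * x"] \<open>0 \<le> x\<close> G_nonneg M_nonneg by (simp add: mult_left_mono)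
  also have "\<dots> \<le> sqrt 2 * G * M * sqrt (mutual_info p (\<lambda>a. a) r)"
    using x_le_mutual_info G_nonneg M_nonneg by (simp add: real_sqrt_mult mult_left_mono mult_ac)
  finally show ?thesis .
qed

theorem theorem1:
  fixes \<pi> :: "'v::euclidean_space \<Rightarrow> 'a::finite \<Rightarrow> real"
    and R :: "'a \<Rightarrow> real"
    and \<theta> :: 'v
    and G_max R_max :: real
  assumes pos: "\<And>\<phi> a. \<pi> \<phi> a > 0"
    and prob: "\<And>\<phi>. (\<Sum>a\<in>UNIV. \<pi> \<phi> a) = 1"
    and diff: "\<And>\<phi> a. (\<lambda>t. \<pi> t a) differentiable (at \<phi>)"
    and score_bound: "\<And>a. norm (grad (\<lambda>t. ln (\<pi> t a)) \<theta>) \<le> G_max"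
    and reward_bound: "\<And>a. \<bar>R a\<bar> \<le> R_max"
  shows "norm (grad (\<lambda>t. \<Sum>a\<in>UNIV. \<pi> t a * R a) \<theta>)
           \<le> sqrt 2 * G_max * R_max * sqrt (mutual_info (\<pi> \<theta>) (\<lambda>a. a) R)"
proof -
  define D where "D a = grad (\<lambda>t. \<pi> t a) \<theta>" for a
  have D_norm: "norm (D a) \<le> \<pi> \<theta> a * G_max" for a
    using score_bound[of a] pos[of \<theta> a]
    by (simp add: grad_ln[OF diff pos] D_def divide_le_eq mult.commute)
  have "(\<Sum>a\<in>UNIV. D a) = grad (\<lambda>t. \<Sum>a\<in>UNIV. \<pi> t a) \<theta>"
    unfolding D_def by (rule grad_sum[symmetric]) (simp_all add: diff)
  then have D_sum: "(\<Sum>a\<in>UNIV. D a) = 0"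
    by (simp add: prob grad_const)
  have "grad (\<lambda>t. \<Sum>a\<in>UNIV. \<pi> t a * R a) \<theta> = (\<Sum>a\<in>UNIV. R a *\<^sub>R D a)"
    unfolding D_def using diff
    by (subst grad_sum) (simp_all add: grad_mult_const differentiable_mult)
  then show ?thesis
    using norm_sum_scaleR_le_mutual_info[OF _ prob D_sum D_norm reward_bound] pos
    by (simp add: less_imp_le)
qed

end
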